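(* Let $p,q,r$ be positive integers with $\frac1p+\frac1q+\frac1r\le1$, $M=\max\{p,q,r\}$, $m>0$, and let $a$ be a real number with $a>\max\{12M,\,m^2(m+3)\}$. Let $f(x,y,z)=x^p+y^q+z^r+axyz$ and $V_a(1,t)=f^{-1}(t)\cap D^6_1$, where $D^6_1$ is the closed unit ball in $\mathbb C^3$. Then for any real $\theta$, $V_a(1,\frac1a e^{i\theta})$ is a Milnor fiber of $f$, and every point $(x,y,z)\in V_a(1,\frac1ae^{i\theta})$ satisfies $\max\{|x|,|y|,|z|\}>\frac ma$.
   Context: The Milnor radius $\varepsilon_f$ of $f$ is the supremum of $\varepsilon$ such that every sphere $S^5_\rho$ ($0<\rho\le\varepsilon$) centered at the origin is transverse to $f^{-1}(0)$. A Milnor fiber of $f$ is a set $f^{-1}(\delta e^{i\theta})\cap D^6_\varepsilon$ where $\varepsilon<\varepsilon_f$ and $\delta>0$ is such that $f^{-1}(s)$ meets $S^5_\varepsilon$ transversally for all $0\le|s|\le\delta$. *)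

theory Defs
  imports "HOL-Analysis.Analysis"
begin

text \<open>Points of C^3 are elements of complex^3 (Euclidean norm, real inner product
  of the underlying R^6).\<close>

definition fpqr :: "nat \<Rightarrow> nat \<Rightarrow> nat \<Rightarrow> real \<Rightarrow> complex^3 \<Rightarrow> complex" where
  "fpqr p q r a w = (w$1)^p + (w$2)^q + (w$3)^r + complex_of_real a * (w$1) * (w$2) * (w$3)"

text \<open>The level set of g through z meets the sphere through z (centred at 0) transversally
  at z: z is a regular point of g (the real differential is onto), and the tangent space of
  the level set (kernel of the differential) together with the tangent space of the sphere
  (vectors orthogonal to z) spans the whole real tangent space.\<close>

definition level_sphere_transversal_at :: "(complex^3 \<Rightarrow> complex) \<Rightarrow> complex^3 \<Rightarrow> bool" where
  "level_sphere_transversal_at g z \<longleftrightarrow>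
     (\<exists>g'. (g has_derivative g') (at z) \<and> range g' = UNIV \<and>
        (\<forall>w. \<exists>u v. w = u + v \<and> g' u = 0 \<and> inner v z = 0))"

definition sphere_transversal :: "(complex^3 \<Rightarrow> complex) \<Rightarrow> real \<Rightarrow> complex \<Rightarrow> bool" where
  "sphere_transversal g \<rho> s \<longleftrightarrow>
     (\<forall>z. norm z = \<rho> \<and> g z = s \<longrightarrow> level_sphere_transversal_at g z)"

definition milnor_radius :: "(complex^3 \<Rightarrow> complex) \<Rightarrow> ereal" where
  "milnor_radius g =
     (SUP \<epsilon>\<in>{\<epsilon>. \<epsilon> > 0 \<and> (\<forall>\<rho>. 0 < \<rho> \<and> \<rho> \<le> \<epsilon> \<longrightarrow> sphere_transversal g \<rho> 0)}. ereal \<epsilon>)"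

definition is_milnor_fiber :: "(complex^3 \<Rightarrow> complex) \<Rightarrow> (complex^3) set \<Rightarrow> bool" where
  "is_milnor_fiber g F \<longleftrightarrow>
     (\<exists>\<epsilon> \<delta> \<theta>. 0 < \<epsilon> \<and> ereal \<epsilon> < milnor_radius g \<and> 0 < \<delta> \<and>
        (\<forall>s. cmod s \<le> \<delta> \<longrightarrow> sphere_transversal g \<epsilon> s) \<and>
        F = {w. g w = complex_of_real \<delta> * cis \<theta>} \<inter> cball 0 \<epsilon>)"

end

theory Submission
  imports Defs
begin

text \<open>
  A fibre of f through w \<noteq> 0 fails to be transversal to the sphere through w exactly when the
  complex gradient of f at w is a multiple \<mu> of the conjugate point, i.e. w = (x, y, z) is a
  critical point of f on that sphere. Multiplying the three Lagrange equations by x, y, z and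
  adding them with weights 1/p, 1/q, 1/r expresses \<mu> through the value s of f and the term
  A = a x y z; eliminating \<mu> again gives bounds of the form |A| \<le> p (|s| + |x|^p).
  If |A| \<ge> 2M|s|, all of |x|^p, |y|^q, |z|^r are at least |A|/2M, and 1/p + 1/q + 1/r \<le> 1
  yields either |x y z| \<ge> a |x y z| / 2M, impossible as a > 2M, or |w|^2 > 3.
  Otherwise s \<noteq> 0, so |w| = 1 and |s| \<le> 1/a; then |\<mu>| \<le> M/4, and the Lagrange equations
  force a coordinate to vanish, which is excluded directly. Hence the zero fibre meets every
  sphere of radius < sqrt 3 transversally and the fibres with |s| \<le> 1/a meet the unit sphere
  transversally. Finally, a point of the unit ball with all coordinates of modulus \<le> m/a has
  |f| \<le> 3 (m/a)^2 + a (m/a)^3 = m^2 (m + 3) / a^2 < 1/a.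
\<close>

lemma norm_vec_power2_eq_sum: "(norm (v::'a::real_inner^'n))\<^sup>2 = (\<Sum>i\<in>UNIV. (norm (v$i))\<^sup>2)"
  by (simp add: power2_norm_eq_inner inner_vec_def)

lemma exists_kernel_vector_not_orthogonal:
  fixes z G :: "complex^'n"
  assumes z: "z \<noteq> 0" and not_parallel: "\<nexists>\<mu>. \<forall>i. G$i = \<mu> * cnj (z$i)"
  shows "\<exists>u. (\<Sum>i\<in>UNIV. G$i * u$i) = 0 \<and> inner u z > 0"
proof -
  define N where "N = (norm G)\<^sup>2"
  define S where "S = (\<Sum>i\<in>UNIV. z$i * G$i)"
  \<comment> \<open>N times the component of z Hermitian-orthogonal to cnj G, so inner u u = N * inner u z\<close>
  define u where "u = (\<chi> i. of_real N * z$i - S * cnj (G$i))"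
  have N_eq: "of_real N = (\<Sum>i\<in>UNIV. G$i * cnj (G$i))"
    unfolding N_def norm_vec_power2_eq_sum of_real_sum complex_norm_square ..
  have "(\<Sum>i\<in>UNIV. G$i * u$i) = of_real N * S - S * (\<Sum>i\<in>UNIV. G$i * cnj (G$i))"
    by (simp add: u_def S_def right_diff_distrib sum_subtractf sum_distrib_left mult_ac)
  then have Du: "(\<Sum>i\<in>UNIV. G$i * u$i) = 0"
    by (simp add: N_eq)
  have "G \<noteq> 0"
    using not_parallel by (metis mult_zero_left vec_eq_iff zero_index)
  then have N: "N > 0"
    by (simp add: N_def)
  have "u \<noteq> 0"
  proof
    assume "u = 0"
    then have u0: "of_real N * z$i = S * cnj (G$i)" for i
      by (simp add: u_def vec_eq_iff)
    have "S \<noteq> 0"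
      using u0 N z by (metis mult_eq_0_iff of_real_eq_0_iff vec_eq_iff zero_index less_irrefl)
    have "G$i = (of_real N / cnj S) * cnj (z$i)" for i
      using arg_cong[OF u0[of i], of cnj] \<open>S \<noteq> 0\<close> by (simp add: field_simps)
    with not_parallel show False by blast
  qed
  have "inner (u$i) (u$i) = N * inner (u$i) (z$i) - Re (cnj S * (G$i * u$i))" for i
    by (simp add: u_def inner_complex_def algebra_simps)
  then have "inner u u = N * inner u z - Re (cnj S * (\<Sum>i\<in>UNIV. G$i * u$i))"
    by (simp add: inner_vec_def sum_subtractf sum_distrib_left)
  then have "inner u u = N * inner u z"
    using Du by simp
  then have "inner u z > 0"
    using \<open>u \<noteq> 0\<close> N by (metis inner_gt_zero_iff zero_less_mult_pos)
  with Du show ?thesis by blast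
qed

lemma level_sphere_transversal_atI:
  fixes z G :: "complex^3"
  assumes deriv: "(F has_derivative (\<lambda>u. \<Sum>i\<in>UNIV. G$i * u$i)) (at z)"
    and z: "z \<noteq> 0" and not_parallel: "\<nexists>\<mu>. \<forall>i. G$i = \<mu> * cnj (z$i)"
  shows "level_sphere_transversal_at F z"
proof -
  define D where "D = (\<lambda>u::complex^3. \<Sum>i\<in>UNIV. G$i * u$i)"
  obtain u0 where Du0: "D u0 = 0" and u0z: "inner u0 z > 0"
    using exists_kernel_vector_not_orthogonal[OF z not_parallel] unfolding D_def by blast
  obtain j where "G$j \<noteq> 0"
    using not_parallel by (metis mult_zero_left)
  then have "D (axis j (t / G$j)) = t" for t
    by (simp add: D_def axis_def if_distrib cong: if_cong)
  then have onto: "range D = UNIV"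
    by (metis rangeI surj_def)
  have "\<exists>u v. w = u + v \<and> D u = 0 \<and> inner v z = 0" for w
  proof (intro exI conjI)
    define c where "c = inner w z / inner u0 z"
    show "w = c *\<^sub>R u0 + (w - c *\<^sub>R u0)"
      by simp
    show "D (c *\<^sub>R u0) = 0"
      using Du0 by (simp add: D_def flip: scaleR_sum_right)
    show "inner (w - c *\<^sub>R u0) z = 0"
      using u0z by (simp add: c_def inner_diff_left)
  qed
  with deriv onto show ?thesis
    unfolding level_sphere_transversal_at_def D_def by blast
qed

lemma milnor_radius_ge:
  assumes "0 < \<epsilon>" and "\<And>\<rho>. 0 < \<rho> \<Longrightarrow> \<rho> \<le> \<epsilon> \<Longrightarrow> sphere_transversal g \<rho> 0"
  shows "ereal \<epsilon> \<le> milnor_radius g"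
  unfolding milnor_radius_def using assms by (intro SUP_upper) auto

definition fpqr_grad :: "nat \<Rightarrow> nat \<Rightarrow> nat \<Rightarrow> real \<Rightarrow> complex^3 \<Rightarrow> complex^3" where
  "fpqr_grad p q r a w = vector
     [of_nat p * (w$1)^(p-1) + of_real a * w$2 * w$3,
      of_nat q * (w$2)^(q-1) + of_real a * w$1 * w$3,
      of_nat r * (w$3)^(r-1) + of_real a * w$1 * w$2]"

lemma fpqr_has_derivative:
  "(fpqr p q r a has_derivative (\<lambda>u. \<Sum>i\<in>UNIV. fpqr_grad p q r a z $ i * u$i)) (at z)"
proof -
  have [derivative_intros]: "((\<lambda>w::complex^3. w$i) has_derivative (\<lambda>u. u$i)) (at z)" for i
    by (rule bounded_linear_imp_has_derivative[OF bounded_linear_vec_nth])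
  show ?thesis
    unfolding fpqr_def[abs_def]
    by (rule has_derivative_eq_rhs, intro derivative_eq_intros)
      (auto simp: fpqr_grad_def sum_3 algebra_simps fun_eq_iff)
qed

lemma powr_inverse_le_if_le_power:
  fixes t W :: real
  assumes "0 \<le> t" "t \<le> W ^ n" "0 < n" "0 \<le> W"
  shows "t powr (1 / n) \<le> W"
proof -
  have "t powr (1 / n) \<le> (W ^ n) powr (1 / n)"
    using assms by (intro powr_mono2) auto
  also have "\<dots> = W"
    using assms by (simp flip: root_powr_inverse add: real_root_power_cancel)
  finally show ?thesis .
qed

lemma le_prod_if_le_powers:
  fixes t X Y Z :: real
  assumes t: "0 \<le> t" "t \<le> 1" and "0 \<le> X" "0 \<le> Y" "0 \<le> Z"
    and "t \<le> X ^ p" "t \<le> Y ^ q" "t \<le> Z ^ r" and "0 < p" "0 < q" "0 < r"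
    and exponents: "1 / p + 1 / q + 1 / r \<le> 1"
  shows "t \<le> X * Y * Z"
proof -
  have "t = t powr 1"
    using t by simp
  also have "\<dots> \<le> t powr (1 / p + 1 / q + 1 / r)"
    using t exponents by (intro powr_mono') auto
  also have "\<dots> = t powr (1 / p) * t powr (1 / q) * t powr (1 / r)"
    by (simp add: powr_add)
  also have "\<dots> \<le> X * Y * Z"
    using assms by (intro mult_mono powr_inverse_le_if_le_power) auto
  finally show ?thesis .
qed

lemma sum_squares_gt_3_if_large_product:
  fixes X Y Z a c :: real and p q r M :: nat
  assumes pos: "0 < X" "0 < Y" "0 < Z" "0 < p" "0 < q" "0 < r" "0 \<le> c"
    and le_M: "p \<le> M" "q \<le> M" "r \<le> M"
    and exponents: "1 / p + 1 / q + 1 / r \<le> 1" and a: "2 * real M < a"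
    and large: "2 * real M * c \<le> a * X * Y * Z"
    and bounds: "a * X * Y * Z \<le> p * (c + X ^ p)" "a * X * Y * Z \<le> q * (c + Y ^ q)"
      "a * X * Y * Z \<le> r * (c + Z ^ r)"
  shows "3 < X\<^sup>2 + Y\<^sup>2 + Z\<^sup>2"
proof -
  define t where "t = a * X * Y * Z / (2 * real M)"
  have M: "0 < M"
    using pos le_M by linarith
  have t_le: "t \<le> W ^ n" if "a * X * Y * Z \<le> n * (c + W ^ n)" "n \<le> M" "0 \<le> W" for W n
  proof -
    have "n * (c + W ^ n) \<le> M * (c + W ^ n)"
      using that pos by (intro mult_right_mono) auto
    with that large M show ?thesis
      by (simp add: t_def field_simps)
  qed
  have t_le_powers: "t \<le> X ^ p" "t \<le> Y ^ q" "t \<le> Z ^ r"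
    using t_le bounds le_M pos by auto
  show ?thesis
  proof (cases "t \<le> 1")
    case True
    have "0 \<le> t"
      using pos a M by (simp add: t_def)
    then have "t \<le> X * Y * Z"
      using True pos t_le_powers exponents by (intro le_prod_if_le_powers) auto
    then have "a \<le> 2 * real M"
      using pos M by (simp add: t_def field_simps)
    with a show ?thesis
      by simp
  next
    case False
    then have "1 < X ^ p" "1 < Y ^ q" "1 < Z ^ r"
      using t_le_powers by linarith+
    then have "1 < X" "1 < Y" "1 < Z"
      using pos by (meson power_le_one less_imp_le not_le)+
    then have "1 < X\<^sup>2" "1 < Y\<^sup>2" "1 < Z\<^sup>2"
      by (auto intro: one_less_power)
    then show ?thesis
      by linarith
  qed
qed

lemma prod_eq_0_if_cross_bounds:
  fixes X Y Z a K :: real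
  assumes nonneg: "0 \<le> X" "0 \<le> Y" "0 \<le> Z" "0 \<le> a" "0 \<le> K"
    and sphere: "X\<^sup>2 + Y\<^sup>2 + Z\<^sup>2 = 1" and K: "3 * K\<^sup>2 < a\<^sup>2"
    and "a * Y * Z \<le> K * X" "a * X * Z \<le> K * Y" "a * X * Y \<le> K * Z"
  shows "X * Y * Z = 0"
proof -
  have zero: "W = 0"
    if "1 / 3 \<le> U\<^sup>2" "a * U * W \<le> K * V" "a * U * V \<le> K * W" "0 \<le> U" "0 \<le> V" "0 \<le> W"
    for U V W :: real
  proof -
    have "(a * U)\<^sup>2 * W = a * U * (a * U * W)"
      by (simp add: power2_eq_square)
    also have "\<dots> \<le> a * U * (K * V)"
      using that nonneg by (intro mult_left_mono) auto
    also have "\<dots> = K * (a * U * V)"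
      by simp
    also have "\<dots> \<le> K * (K * W)"
      using that nonneg by (intro mult_left_mono) auto
    finally have le: "(a * U)\<^sup>2 * W \<le> K\<^sup>2 * W"
      by (simp add: power2_eq_square)
    have "K\<^sup>2 < (a * U)\<^sup>2"
      using K mult_left_mono[OF that(1), of "a\<^sup>2"] by (simp add: power_mult_distrib)
    with le that(6) show "W = 0"
      by (metis mult_le_cancel_right_pos not_le order.order_iff_strict)
  qed
  have "1 / 3 \<le> X\<^sup>2 \<or> 1 / 3 \<le> Y\<^sup>2 \<or> 1 / 3 \<le> Z\<^sup>2"
    using sphere by linarith
  then show ?thesis
  proof (elim disjE)
    assume "1 / 3 \<le> X\<^sup>2"
    then have "Z = 0"
      using assms by (intro zero[of X Z Y]) (simp_all add: mult_ac)
    then show ?thesis by simp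
  next
    assume "1 / 3 \<le> Y\<^sup>2"
    then have "Z = 0"
      using assms by (intro zero[of Y Z X]) (simp_all add: mult_ac)
    then show ?thesis by simp
  next
    assume "1 / 3 \<le> Z\<^sup>2"
    then have "Y = 0"
      using assms by (intro zero[of Z Y X]) (simp_all add: mult_ac)
    then show ?thesis by simp
  qed
qed

lemma lagrange_eq_times_coord:
  fixes x w \<mu> :: complex
  assumes "of_nat n * x ^ (n - 1) + w = \<mu> * cnj x" "1 \<le> n"
  shows "of_nat n * x ^ n + w * x = \<mu> * of_real ((cmod x)\<^sup>2)"
proof -
  have "of_nat n * x ^ n + w * x = (of_nat n * x ^ (n - 1) + w) * x"
    using assms(2) by (simp add: distrib_right mult.assoc power_minus_mult[of n x, symmetric])
  also have "\<dots> = \<mu> * (cnj x * x)"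
    by (simp only: assms(1) mult.assoc)
  finally show ?thesis
    by (metis complex_norm_square mult.commute)
qed

lemma norm_lagrange_remainder_le:
  fixes x w \<mu> :: complex
  assumes "of_nat n * x ^ (n - 1) + w = \<mu> * cnj x" "cmod x \<le> 1" "2 \<le> n" "n \<le> M"
  shows "cmod w \<le> (cmod \<mu> + M) * cmod x"
proof -
  have "cmod x ^ (n - 1) \<le> cmod x ^ 1"
    using assms by (intro power_decreasing) auto
  then have "n * cmod x ^ (n - 1) \<le> M * cmod x"
    using assms by (intro mult_mono) auto
  have "w = \<mu> * cnj x - of_nat n * x ^ (n - 1)"
    using assms(1) by (metis add_diff_cancel_left')
  then have "cmod w \<le> cmod \<mu> * cmod x + n * cmod x ^ (n - 1)"
    by (metis norm_triangle_ineq4 complex_mod_cnj norm_mult norm_of_nat norm_power)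
  with \<open>n * cmod x ^ (n - 1) \<le> M * cmod x\<close> show ?thesis
    by (simp add: algebra_simps)
qed

lemma norm_le_by_eliminating_multiplier:
  fixes x A \<mu> s :: complex and S k :: real
  assumes coord: "of_nat n * x ^ n + A = \<mu> * of_real ((cmod x)\<^sup>2)"
    and weighted: "\<mu> * of_real S = s - of_real k * A"
    and "0 \<le> k" "(cmod x)\<^sup>2 \<le> n * S" "0 < S"
  shows "cmod A \<le> n * (cmod s + cmod x ^ n)"
proof -
  define X2 where "X2 = (cmod x)\<^sup>2"
  have X2: "0 \<le> X2"
    by (simp add: X2_def)
  have monomial: "of_nat n * x ^ n = \<mu> * of_real X2 - A"
    using coord by (simp add: X2_def eq_diff_eq)
  have "of_nat n * x ^ n * of_real S = (s - of_real k * A) * of_real X2 - A * of_real S"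
    unfolding monomial weighted [symmetric] by (simp add: algebra_simps)
  then have eliminated: "A * of_real (S + k * X2) = s * of_real X2 - of_nat n * x ^ n * of_real S"
    by (simp add: algebra_simps)
  have "cmod A * S \<le> cmod A * (S + k * X2)"
    using assms X2 by (simp add: mult_left_mono)
  also have "\<dots> = cmod (s * of_real X2 - of_nat n * x ^ n * of_real S)"
    unfolding eliminated [symmetric] norm_mult norm_of_real using assms X2 by simp
  also have "\<dots> \<le> cmod (s * of_real X2) + cmod (of_nat n * x ^ n * of_real S)"
    by (rule norm_triangle_ineq4)
  also have "\<dots> = cmod s * X2 + n * cmod x ^ n * S"
    using X2 \<open>0 < S\<close> by (simp add: norm_mult norm_power)
  also have "\<dots> \<le> cmod s * (n * S) + n * cmod x ^ n * S"
    using assms by (simp add: X2_def mult_left_mono)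
  finally have "cmod A * S \<le> n * (cmod s + cmod x ^ n) * S"
    by (simp add: algebra_simps)
  with \<open>0 < S\<close> show ?thesis
    by simp
qed

locale fpqr_lagrange_point =
  fixes p q r :: nat and a :: real and x y z \<mu> s :: complex
  assumes exponents_ge_2: "2 \<le> p" "2 \<le> q" "2 \<le> r"
    and reciprocal_sum: "1 / p + 1 / q + 1 / r \<le> 1"
    and a_pos: "0 < a"
    and lagrange_x: "of_nat p * x ^ (p - 1) + of_real a * y * z = \<mu> * cnj x"
    and lagrange_y: "of_nat q * y ^ (q - 1) + of_real a * x * z = \<mu> * cnj y"
    and lagrange_z: "of_nat r * z ^ (r - 1) + of_real a * x * y = \<mu> * cnj z"
    and on_level: "x ^ p + y ^ q + z ^ r + of_real a * x * y * z = s"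
begin

definition cubic_term :: complex where
  "cubic_term = of_real a * x * y * z"

definition weighted_norm :: real where
  "weighted_norm = (cmod x)\<^sup>2 / p + (cmod y)\<^sup>2 / q + (cmod z)\<^sup>2 / r"

lemma lagrange_times_coords:
  "of_nat p * x ^ p + cubic_term = \<mu> * of_real ((cmod x)\<^sup>2)"
  "of_nat q * y ^ q + cubic_term = \<mu> * of_real ((cmod y)\<^sup>2)"
  "of_nat r * z ^ r + cubic_term = \<mu> * of_real ((cmod z)\<^sup>2)"
  using lagrange_eq_times_coord[OF lagrange_x] lagrange_eq_times_coord[OF lagrange_y]
    lagrange_eq_times_coord[OF lagrange_z] exponents_ge_2
  by (simp_all add: cubic_term_def mult_ac)

lemma multiplier_weighted_norm:
  "\<mu> * of_real weighted_norm = s - of_real (1 - (1 / p + 1 / q + 1 / r)) * cubic_term"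
proof -
  have pqr: "0 < p" "0 < q" "0 < r"
    using exponents_ge_2 by auto
  have "\<mu> * of_real weighted_norm = (\<mu> * of_real ((cmod x)\<^sup>2)) / of_nat p
      + (\<mu> * of_real ((cmod y)\<^sup>2)) / of_nat q + (\<mu> * of_real ((cmod z)\<^sup>2)) / of_nat r"
    by (simp add: weighted_norm_def distrib_left)
  also have "\<dots> = (of_nat p * x ^ p + cubic_term) / of_nat p
      + (of_nat q * y ^ q + cubic_term) / of_nat q + (of_nat r * z ^ r + cubic_term) / of_nat r"
    by (simp only: lagrange_times_coords)
  also have "\<dots> = x ^ p + y ^ q + z ^ r + of_real (1 / p + 1 / q + 1 / r) * cubic_term"
    using pqr by (simp add: field_simps)
  also have "\<dots> = s - of_real (1 - (1 / p + 1 / q + 1 / r)) * cubic_term"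
    using on_level by (simp add: cubic_term_def algebra_simps)
  finally show ?thesis .
qed

lemma coords_le_weighted_norm:
  "(cmod x)\<^sup>2 \<le> p * weighted_norm" "(cmod y)\<^sup>2 \<le> q * weighted_norm" "(cmod z)\<^sup>2 \<le> r * weighted_norm"
  using exponents_ge_2 by (auto simp: weighted_norm_def distrib_left)

lemma weighted_norm_pos: "x \<noteq> 0 \<or> y \<noteq> 0 \<or> z \<noteq> 0 \<Longrightarrow> 0 < weighted_norm"
  using exponents_ge_2 by (auto simp: weighted_norm_def add_pos_nonneg add_nonneg_pos)

lemma norm_cubic_term_le:
  assumes "0 < weighted_norm"
  shows "cmod cubic_term \<le> p * (cmod s + cmod x ^ p)"
    "cmod cubic_term \<le> q * (cmod s + cmod y ^ q)"
    "cmod cubic_term \<le> r * (cmod s + cmod z ^ r)"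
proof -
  have k: "0 \<le> 1 - (1 / p + 1 / q + 1 / r)"
    using reciprocal_sum by simp
  show "cmod cubic_term \<le> p * (cmod s + cmod x ^ p)"
    by (rule norm_le_by_eliminating_multiplier[OF lagrange_times_coords(1) multiplier_weighted_norm k
          coords_le_weighted_norm(1) assms])
  show "cmod cubic_term \<le> q * (cmod s + cmod y ^ q)"
    by (rule norm_le_by_eliminating_multiplier[OF lagrange_times_coords(2) multiplier_weighted_norm k
          coords_le_weighted_norm(2) assms])
  show "cmod cubic_term \<le> r * (cmod s + cmod z ^ r)"
    by (rule norm_le_by_eliminating_multiplier[OF lagrange_times_coords(3) multiplier_weighted_norm k
          coords_le_weighted_norm(3) assms])
qed

lemma norm_multiplier_le: "cmod \<mu> * weighted_norm \<le> cmod s + cmod cubic_term"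
proof -
  define k where "k = 1 - (1 / p + 1 / q + 1 / r)"
  have "0 \<le> 1 / real p" "0 \<le> 1 / real q" "0 \<le> 1 / real r"
    by simp_all
  then have k: "0 \<le> k" "k \<le> 1"
    using reciprocal_sum unfolding k_def by linarith+
  have "weighted_norm \<ge> 0"
    by (simp add: weighted_norm_def)
  then have "cmod \<mu> * weighted_norm = cmod (s - of_real k * cubic_term)"
    by (metis k_def multiplier_weighted_norm abs_of_nonneg norm_mult norm_of_real)
  also have "\<dots> \<le> cmod s + cmod (of_real k * cubic_term)"
    by (rule norm_triangle_ineq4)
  also have "\<dots> = cmod s + k * cmod cubic_term"
    using k by (simp add: norm_mult)
  also have "\<dots> \<le> cmod s + cmod cubic_term"
    using k by (simp add: mult_left_le_one_le)
  finally show ?thesis .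
qed

lemma coords_nonzero:
  assumes "x \<noteq> 0 \<or> y \<noteq> 0 \<or> z \<noteq> 0" and "1 < a"
    and small: "s = 0 \<or> ((cmod x)\<^sup>2 + (cmod y)\<^sup>2 + (cmod z)\<^sup>2 = 1 \<and> cmod s \<le> 1 / a)"
  shows "x \<noteq> 0" "y \<noteq> 0" "z \<noteq> 0"
proof -
  have single_power: False
    if "w ^ n = s" "w \<noteq> 0" "0 < n" "s = 0 \<or> ((cmod w)\<^sup>2 = 1 \<and> cmod s \<le> 1 / a)" for w n
    using that \<open>1 < a\<close> norm_ge_zero[of w] by (auto simp: norm_power power2_eq_1_iff)
  have zero_powers: "0 ^ p = (0::complex)" "0 ^ q = (0::complex)" "0 ^ r = (0::complex)"
    using exponents_ge_2 by (simp_all add: power_0_left)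
  have "\<not> (y = 0 \<and> z = 0)" "\<not> (x = 0 \<and> z = 0)" "\<not> (x = 0 \<and> y = 0)"
    using single_power[of x p] single_power[of y q] single_power[of z r]
      on_level assms(1) small exponents_ge_2 by (auto simp: zero_powers)
  moreover have "(x = 0 \<and> y = 0) \<or> (x = 0 \<and> z = 0) \<or> (y = 0 \<and> z = 0)" if "x = 0 \<or> y = 0 \<or> z = 0"
    using that lagrange_x lagrange_y lagrange_z exponents_ge_2 a_pos by (auto simp: power_0_left)
  ultimately show "x \<noteq> 0" "y \<noteq> 0" "z \<noteq> 0"
    by auto
qed

lemma sum_squares_gt_3_if_cubic_term_large:
  assumes nonzero: "x \<noteq> 0" "y \<noteq> 0" "z \<noteq> 0" and le_M: "p \<le> M" "q \<le> M" "r \<le> M"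
    and "2 * real M < a" and large: "2 * real M * cmod s \<le> cmod cubic_term"
  shows "3 < (cmod x)\<^sup>2 + (cmod y)\<^sup>2 + (cmod z)\<^sup>2"
proof -
  have "0 < weighted_norm"
    using weighted_norm_pos nonzero by blast
  moreover have cubic: "cmod cubic_term = a * cmod x * cmod y * cmod z"
    using a_pos by (simp add: cubic_term_def norm_mult)
  ultimately show ?thesis
    using nonzero exponents_ge_2
    by (intro sum_squares_gt_3_if_large_product[OF _ _ _ _ _ _ _ le_M reciprocal_sum \<open>2 * real M < a\<close>
          large[unfolded cubic] norm_cubic_term_le[unfolded cubic]]) auto
qed

lemma inverse_le_weighted_norm:
  assumes le_M: "p \<le> M" "q \<le> M" "r \<le> M"
    and sphere: "(cmod x)\<^sup>2 + (cmod y)\<^sup>2 + (cmod z)\<^sup>2 = 1"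
  shows "1 / M \<le> weighted_norm"
proof -
  have "(cmod x)\<^sup>2 / M \<le> (cmod x)\<^sup>2 / p" "(cmod y)\<^sup>2 / M \<le> (cmod y)\<^sup>2 / q"
    "(cmod z)\<^sup>2 / M \<le> (cmod z)\<^sup>2 / r"
    using le_M exponents_ge_2 by (auto intro!: divide_left_mono)
  moreover have "(cmod x)\<^sup>2 / M + (cmod y)\<^sup>2 / M + (cmod z)\<^sup>2 / M = 1 / M"
    using sphere by (simp flip: add_divide_distrib)
  ultimately show ?thesis
    unfolding weighted_norm_def by linarith
qed

lemma norm_multiplier_le_if_cubic_term_small:
  assumes le_M: "p \<le> M" "q \<le> M" "r \<le> M" and a: "12 * real M < a"
    and sphere: "(cmod x)\<^sup>2 + (cmod y)\<^sup>2 + (cmod z)\<^sup>2 = 1" and s: "cmod s \<le> 1 / a"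
    and small: "cmod cubic_term < 2 * real M * cmod s"
  shows "cmod \<mu> \<le> M / 4"
proof -
  have M: "2 \<le> real M"
    using exponents_ge_2 le_M by simp
  have "cmod \<mu> * (1 / M) \<le> cmod s + cmod cubic_term"
    using norm_multiplier_le inverse_le_weighted_norm[OF le_M sphere]
    by (meson mult_left_mono norm_ge_zero order_trans)
  then have "cmod \<mu> \<le> M * (cmod s + cmod cubic_term)"
    using M by (simp add: field_simps)
  also have "\<dots> \<le> M * ((1 + 2 * real M) * cmod s)"
    using small by (intro mult_left_mono) (auto simp: algebra_simps)
  also have "\<dots> \<le> M * ((1 + 2 * real M) * (1 / a))"
    using s by (intro mult_left_mono) auto
  also have "\<dots> \<le> M * (1 / 4)"
  proof -
    have "4 * (1 + 2 * real M) \<le> a"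
      using M a by (simp add: algebra_simps)
    then have "(1 + 2 * real M) * (1 / a) \<le> 1 / 4"
      using a_pos by (simp add: field_simps)
    then show ?thesis
      by (intro mult_left_mono) auto
  qed
  finally show ?thesis
    by simp
qed

lemma prod_eq_0_if_cubic_term_small:
  assumes le_M: "p \<le> M" "q \<le> M" "r \<le> M" and a: "12 * real M < a"
    and sphere: "(cmod x)\<^sup>2 + (cmod y)\<^sup>2 + (cmod z)\<^sup>2 = 1" and "cmod s \<le> 1 / a"
    and "cmod cubic_term < 2 * real M * cmod s"
  shows "x * y * z = 0"
proof -
  define K where "K = cmod \<mu> + M"
  have "3 * K\<^sup>2 < a\<^sup>2"
  proof -
    have "3 * K\<^sup>2 \<le> 3 * (5 * real M / 4)\<^sup>2"
      using norm_multiplier_le_if_cubic_term_small[OF assms]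
      unfolding K_def by (intro mult_left_mono power_mono) auto
    also have "\<dots> < (12 * real M)\<^sup>2"
      using exponents_ge_2 le_M by (simp add: power2_eq_square)
    also have "\<dots> < a\<^sup>2"
      using a by (intro power_strict_mono) auto
    finally show ?thesis .
  qed
  moreover have "cmod x \<le> 1" "cmod y \<le> 1" "cmod z \<le> 1"
  proof -
    have "0 \<le> (cmod x)\<^sup>2" "0 \<le> (cmod y)\<^sup>2" "0 \<le> (cmod z)\<^sup>2"
      by simp_all
    then have "(cmod x)\<^sup>2 \<le> 1" "(cmod y)\<^sup>2 \<le> 1" "(cmod z)\<^sup>2 \<le> 1"
      using sphere by linarith+
    then show "cmod x \<le> 1" "cmod y \<le> 1" "cmod z \<le> 1"
      by (simp_all add: abs_square_le_1)
  qed
  then have "a * cmod y * cmod z \<le> K * cmod x" "a * cmod x * cmod z \<le> K * cmod y"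
    "a * cmod x * cmod y \<le> K * cmod z"
    using norm_lagrange_remainder_le[OF lagrange_x _ _ le_M(1)]
      norm_lagrange_remainder_le[OF lagrange_y _ _ le_M(2)]
      norm_lagrange_remainder_le[OF lagrange_z _ _ le_M(3)] exponents_ge_2 a_pos
    by (simp_all add: K_def norm_mult)
  ultimately have "cmod x * cmod y * cmod z = 0"
    using sphere a_pos by (intro prod_eq_0_if_cross_bounds) (auto simp: K_def)
  then show ?thesis
    by (simp add: norm_mult [symmetric])
qed

lemma coords_eq_0:
  assumes le_M: "p \<le> M" "q \<le> M" "r \<le> M" and a: "12 * real M < a"
    and radius: "(cmod x)\<^sup>2 + (cmod y)\<^sup>2 + (cmod z)\<^sup>2 < 3"
    and small: "s = 0 \<or> ((cmod x)\<^sup>2 + (cmod y)\<^sup>2 + (cmod z)\<^sup>2 = 1 \<and> cmod s \<le> 1 / a)"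
  shows "x = 0 \<and> y = 0 \<and> z = 0"
proof (rule ccontr)
  assume "\<not> (x = 0 \<and> y = 0 \<and> z = 0)"
  moreover have "1 < a" "2 * real M < a"
    using a exponents_ge_2 le_M by linarith+
  ultimately have nonzero: "x \<noteq> 0" "y \<noteq> 0" "z \<noteq> 0"
    using coords_nonzero small by blast+
  show False
  proof (cases "2 * real M * cmod s \<le> cmod cubic_term")
    case True
    with radius show False
      using sum_squares_gt_3_if_cubic_term_large[OF nonzero le_M \<open>2 * real M < a\<close>] by simp
  next
    case False
    then have "s \<noteq> 0"
      by auto
    with small have "(cmod x)\<^sup>2 + (cmod y)\<^sup>2 + (cmod z)\<^sup>2 = 1" "cmod s \<le> 1 / a"
      by auto
    with False le_M a have "x * y * z = 0"
      by (intro prod_eq_0_if_cubic_term_small) auto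
    with nonzero show False
      by simp
  qed
qed

end

lemma fpqr_level_sphere_transversal_at:
  fixes w :: "complex^3"
  assumes exponents: "2 \<le> p" "2 \<le> q" "2 \<le> r" "1 / p + 1 / q + 1 / r \<le> 1"
    and le_M: "p \<le> M" "q \<le> M" "r \<le> M" and a: "12 * real M < a"
    and w: "w \<noteq> 0" "(norm w)\<^sup>2 < 3"
    and small: "fpqr p q r a w = 0 \<or> (norm w = 1 \<and> cmod (fpqr p q r a w) \<le> 1 / a)"
  shows "level_sphere_transversal_at (fpqr p q r a) w"
proof (rule level_sphere_transversal_atI[OF fpqr_has_derivative w(1)])
  show "\<nexists>\<mu>. \<forall>i. fpqr_grad p q r a w $ i = \<mu> * cnj (w$i)"
  proof
    assume "\<exists>\<mu>. \<forall>i. fpqr_grad p q r a w $ i = \<mu> * cnj (w$i)"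
    then obtain \<mu> where \<mu>: "\<forall>i. fpqr_grad p q r a w $ i = \<mu> * cnj (w$i)" ..
    have "0 < a"
      using a by linarith
    then interpret fpqr_lagrange_point p q r a "w$1" "w$2" "w$3" \<mu> "fpqr p q r a w"
      using exponents \<mu> by unfold_locales (auto simp: fpqr_grad_def fpqr_def forall_3)
    have norm_w: "(norm w)\<^sup>2 = (cmod (w$1))\<^sup>2 + (cmod (w$2))\<^sup>2 + (cmod (w$3))\<^sup>2"
      by (simp add: norm_vec_power2_eq_sum sum_3)
    have "w$1 = 0 \<and> w$2 = 0 \<and> w$3 = 0"
      using le_M a w(2) small by (intro coords_eq_0) (auto simp flip: norm_w)
    with w(1) show False
      by (simp add: vec_eq_iff forall_3)
  qed
qed

lemma norm_fpqr_lt_if_coords_small: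
  fixes w :: "complex^3"
  assumes exponents: "2 \<le> p" "2 \<le> q" "2 \<le> r" and "0 < m" and a: "m\<^sup>2 * (m + 3) < a"
    and "norm w \<le> 1" and small: "\<forall>i. cmod (w$i) \<le> m / a"
  shows "cmod (fpqr p q r a w) < 1 / a"
proof -
  define X Y Z where "X = cmod (w$1)" and "Y = cmod (w$2)" and "Z = cmod (w$3)"
  define \<epsilon> where "\<epsilon> = m / a"
  have "0 < m\<^sup>2 * (m + 3)"
    using \<open>0 < m\<close> by simp
  then have "0 < a"
    using a by linarith
  then have "0 \<le> \<epsilon>"
    using \<open>0 < m\<close> by (simp add: \<epsilon>_def)
  have le_1: "X \<le> 1" "Y \<le> 1" "Z \<le> 1"
    using Finite_Cartesian_Product.norm_nth_le[of w] \<open>norm w \<le> 1\<close>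
    unfolding X_def Y_def Z_def by (meson order_trans)+
  have le_\<epsilon>: "X \<le> \<epsilon>" "Y \<le> \<epsilon>" "Z \<le> \<epsilon>"
    using small by (simp_all add: X_def Y_def Z_def \<epsilon>_def)
  have "X ^ p \<le> \<epsilon>\<^sup>2" "Y ^ q \<le> \<epsilon>\<^sup>2" "Z ^ r \<le> \<epsilon>\<^sup>2"
    using le_1 le_\<epsilon> exponents
    by (auto simp: X_def Y_def Z_def intro!: order_trans[OF power_decreasing power_mono])
  moreover have "a * (X * Y * Z) \<le> a * (\<epsilon> * \<epsilon> * \<epsilon>)"
    using le_\<epsilon> \<open>0 \<le> \<epsilon>\<close> \<open>0 < a\<close> by (intro mult_left_mono mult_mono) (auto simp: X_def Y_def Z_def)
  moreover have "cmod (fpqr p q r a w) \<le> X ^ p + Y ^ q + Z ^ r + a * (X * Y * Z)"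
  proof -
    have "cmod (fpqr p q r a w) \<le> cmod ((w$1) ^ p) + cmod ((w$2) ^ q) + cmod ((w$3) ^ r)
        + cmod (of_real a * w$1 * w$2 * w$3)"
      unfolding fpqr_def by (intro norm_triangle_le add_mono order_refl)
    then show ?thesis
      using \<open>0 < a\<close> by (simp add: X_def Y_def Z_def norm_mult norm_power mult.assoc)
  qed
  ultimately have "cmod (fpqr p q r a w) \<le> 3 * \<epsilon>\<^sup>2 + a * (\<epsilon> * \<epsilon> * \<epsilon>)"
    by linarith
  also have "\<dots> = m\<^sup>2 * (m + 3) / a * (1 / a)"
    using \<open>0 < a\<close> by (simp add: \<epsilon>_def field_simps power2_eq_square)
  also have "\<dots> < 1 * (1 / a)"
    using a \<open>0 < a\<close> by (intro mult_strict_right_mono) auto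
  finally show ?thesis
    by simp
qed

lemma max_norm_coord_gt_if_norm_fpqr_eq:
  fixes w :: "complex^3"
  assumes "2 \<le> p" "2 \<le> q" "2 \<le> r" and "0 < m" and "m\<^sup>2 * (m + 3) < a"
    and "norm w \<le> 1" and "cmod (fpqr p q r a w) = 1 / a"
  shows "m / a < max (cmod (w$1)) (max (cmod (w$2)) (cmod (w$3)))"
proof (rule ccontr)
  assume "\<not> ?thesis"
  then have "\<forall>i. cmod (w$i) \<le> m / a"
    by (auto simp: forall_3)
  with assms have "cmod (fpqr p q r a w) < 1 / a"
    by (intro norm_fpqr_lt_if_coords_small) auto
  with assms show False
    by simp
qed

lemma fpqr_is_milnor_fiber:
  assumes exponents: "2 \<le> p" "2 \<le> q" "2 \<le> r" "1 / p + 1 / q + 1 / r \<le> 1"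
    and le_M: "p \<le> M" "q \<le> M" "r \<le> M" and a: "12 * real M < a"
  shows "is_milnor_fiber (fpqr p q r a)
    ({w. fpqr p q r a w = complex_of_real (1 / a) * cis \<theta>} \<inter> cball 0 1)"
proof -
  let ?f = "fpqr p q r a"
  have transversal: "level_sphere_transversal_at ?f w"
    if "w \<noteq> 0" "(norm w)\<^sup>2 < 3" "?f w = 0 \<or> (norm w = 1 \<and> cmod (?f w) \<le> 1 / a)" for w
    using fpqr_level_sphere_transversal_at[OF exponents le_M a that] .
  \<comment> \<open>any radius strictly between 1 and sqrt 3 would do\<close>
  have "ereal (3 / 2) \<le> milnor_radius ?f"
  proof (rule milnor_radius_ge)
    fix \<rho> :: real assume "0 < \<rho>" "\<rho> \<le> 3 / 2"
    then have "\<rho>\<^sup>2 \<le> (3 / 2)\<^sup>2"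
      by (intro power_mono) auto
    then have "\<rho>\<^sup>2 < 3"
      by (simp add: power_divide)
    with \<open>0 < \<rho>\<close> show "sphere_transversal ?f \<rho> 0"
      unfolding sphere_transversal_def by (auto intro: transversal)
  qed simp
  then have "ereal 1 < milnor_radius ?f"
    by (rule order.strict_trans2[rotated]) simp
  moreover have "sphere_transversal ?f 1 s" if "cmod s \<le> 1 / a" for s
    using that unfolding sphere_transversal_def by (auto intro: transversal)
  moreover have "0 < a"
    using a by linarith
  ultimately show ?thesis
    unfolding is_milnor_fiber_def by (intro exI[of _ 1] exI[of _ "1 / a"] exI[of _ \<theta>]) auto
qed

lemma two_le_if_reciprocal_sum_le_1:
  fixes p q r :: nat
  assumes "0 < p" "0 < q" "0 < r" and "1 / p + 1 / q + 1 / r \<le> 1"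
  shows "2 \<le> p"
proof (rule ccontr)
  assume "\<not> 2 \<le> p"
  with assms(1) have "p = 1"
    by simp
  moreover have "0 < 1 / real q + 1 / real r"
    using assms(2,3) by (simp add: add_pos_pos)
  ultimately show False
    using assms(4) by simp
qed

theorem lemma1p9:
  fixes p q r :: nat and a m \<theta> :: real
  assumes "p > 0" "q > 0" "r > 0"
    and "1 / real p + 1 / real q + 1 / real r \<le> 1"
    and "m > 0"
    and "a > max (12 * real (max p (max q r))) (m\<^sup>2 * (m + 3))"
  shows "is_milnor_fiber (fpqr p q r a)
           ({w. fpqr p q r a w = complex_of_real (1 / a) * cis \<theta>} \<inter> cball 0 1)
       \<and> (\<forall>w \<in> {w. fpqr p q r a w = complex_of_real (1 / a) * cis \<theta>} \<inter> cball 0 1.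
             max (cmod (w$1)) (max (cmod (w$2)) (cmod (w$3))) > m / a)"
proof -
  have exponents: "2 \<le> p" "2 \<le> q" "2 \<le> r"
    using two_le_if_reciprocal_sum_le_1[of p q r] two_le_if_reciprocal_sum_le_1[of q p r]
      two_le_if_reciprocal_sum_le_1[of r p q] assms(1-4) by (simp_all add: ac_simps)
  define M where "M = max p (max q r)"
  have le_M: "p \<le> M" "q \<le> M" "r \<le> M" and a_M: "12 * real M < a" and a_m: "m\<^sup>2 * (m + 3) < a"
    using assms(6) by (auto simp: M_def)
  have "0 < a"
    using a_M by linarith
  then have "m / a < max (cmod (w$1)) (max (cmod (w$2)) (cmod (w$3)))"
    if "fpqr p q r a w = complex_of_real (1 / a) * cis \<theta>" "norm w \<le> 1" for w
    using exponents assms(5) a_m that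
    by (intro max_norm_coord_gt_if_norm_fpqr_eq[of p q r]) (auto simp: norm_divide)
  then show ?thesis
    using fpqr_is_milnor_fiber[OF exponents assms(4) le_M a_M] by auto
qed

end
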